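(* Let $k\ge1$, $t\ge 3$, and let $S_{t-1}$ be a set of representatives of all equivalence classes of binary linear $(t-1)$-CIS $[(t-1)k,k]$ codes, each given by a generator matrix $G_C$. Let $R$ be a set of representatives of the $\sim_1$-equivalence classes of $GL(k,2)$. Let $\overline{S_t}$ be the set of codes generated by the matrices $(G_C\mid B)$ with $C\in S_{t-1}$ and $B\in R$. Then every code in $\overline{S_t}$ is a $t$-CIS $[tk,k]$ code, and every $t$-CIS $[tk,k]$ code is equivalent to some code in $\overline{S_t}$; hence, removing equivalent codes from $\overline{S_t}$ and keeping one representative of each equivalence class yields a set $S_t$ of representatives of all inequivalent $t$-CIS codes of dimension $k$.
   Context: A binary linear $[tk,k]$ code is $t$-CIS if its coordinate set can be partitioned into $t$ pairwise disjoint information sets, an information set being a set of $k$ coordinates whose columns in a generator matrix are linearly independent. Two codes are equivalent if one is obtained from the other by a permutation of coordinates. For $A,B\in GL(k,2)$, $A\sim_1B$ iff $A=BP$ for some $k\times k$ permutation matrix $P$. *)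

theory Defs
  imports "HOL-Combinatorics.Permutations"
begin

(* Binary words of length n: functions nat => bool (True = 1 in GF(2)),
   only coordinates 0..<n are meaningful.  Binary k x n matrices: nat => nat => bool,
   entry (i,j) for i<k, j<n. Addition in GF(2) is parity. *)

type_synonym word = "nat \<Rightarrow> bool"
type_synonym bmat = "nat \<Rightarrow> nat \<Rightarrow> bool"

(* The code (row space over GF(2)) generated by the k x n matrix G:
   all sums of subsets T of rows; coordinates >= n are set to 0. *)
definition code_of :: "nat \<Rightarrow> nat \<Rightarrow> bmat \<Rightarrow> word set" where
  "code_of k n G = {(\<lambda>j. j < n \<and> odd (card {i\<in>T. G i j})) | T. T \<subseteq> {..<k}}"

definition rows_indep :: "nat \<Rightarrow> nat \<Rightarrow> bmat \<Rightarrow> bool" where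
  "rows_indep k n G \<longleftrightarrow>
     (\<forall>T \<subseteq> {..<k}. (\<forall>j<n. even (card {i\<in>T. G i j})) \<longrightarrow> T = {})"

definition cols_indep :: "nat \<Rightarrow> bmat \<Rightarrow> nat set \<Rightarrow> bool" where
  "cols_indep k G I \<longleftrightarrow>
     (\<forall>J \<subseteq> I. (\<forall>i<k. even (card {j\<in>J. G i j})) \<longrightarrow> J = {})"

definition gen_matrix :: "nat \<Rightarrow> nat \<Rightarrow> word set \<Rightarrow> bmat \<Rightarrow> bool" where
  "gen_matrix n k C G \<longleftrightarrow> rows_indep k n G \<and> C = code_of k n G"

definition is_code :: "nat \<Rightarrow> nat \<Rightarrow> word set \<Rightarrow> bool" where
  "is_code n k C \<longleftrightarrow> (\<exists>G. gen_matrix n k C G)"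

definition info_set :: "nat \<Rightarrow> nat \<Rightarrow> word set \<Rightarrow> nat set \<Rightarrow> bool" where
  "info_set n k C I \<longleftrightarrow> I \<subseteq> {..<n} \<and> card I = k \<and>
     (\<exists>G. gen_matrix n k C G \<and> cols_indep k G I)"

definition is_CIS :: "nat \<Rightarrow> nat \<Rightarrow> word set \<Rightarrow> bool" where
  "is_CIS t k C \<longleftrightarrow> is_code (t * k) k C \<and>
     (\<exists>I :: nat \<Rightarrow> nat set.
        (\<forall>s<t. info_set (t * k) k C (I s)) \<and>
        (\<forall>s<t. \<forall>s'<t. s \<noteq> s' \<longrightarrow> I s \<inter> I s' = {}) \<and>
        (\<Union>s<t. I s) = {..<t * k})"

definition code_equiv :: "nat \<Rightarrow> word set \<Rightarrow> word set \<Rightarrow> bool" where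
  "code_equiv n C D \<longleftrightarrow> (\<exists>\<sigma>. \<sigma> permutes {..<n} \<and> D = (\<lambda>w. w \<circ> \<sigma>) ` C)"

definition bmult :: "nat \<Rightarrow> bmat \<Rightarrow> bmat \<Rightarrow> bmat" where
  "bmult k A B = (\<lambda>i j. odd (card {l\<in>{..<k}. A i l \<and> B l j}))"

definition bid :: bmat where
  "bid = (\<lambda>i j. i = j)"

definition mat_eq :: "nat \<Rightarrow> bmat \<Rightarrow> bmat \<Rightarrow> bool" where
  "mat_eq k A B \<longleftrightarrow> (\<forall>i<k. \<forall>j<k. A i j = B i j)"

definition in_GL :: "nat \<Rightarrow> bmat \<Rightarrow> bool" where
  "in_GL k A \<longleftrightarrow> (\<exists>B. mat_eq k (bmult k A B) bid \<and> mat_eq k (bmult k B A) bid)"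

(* A ~1 B iff A = B P for a k x k permutation matrix P, i.e. the columns of A are
   the columns of B permuted *)
definition sim1 :: "nat \<Rightarrow> bmat \<Rightarrow> bmat \<Rightarrow> bool" where
  "sim1 k A B \<longleftrightarrow> (\<exists>\<sigma>. \<sigma> permutes {..<k} \<and> (\<forall>i<k. \<forall>j<k. A i j = B i (\<sigma> j)))"

definition hconcat :: "nat \<Rightarrow> bmat \<Rightarrow> bmat \<Rightarrow> bmat" where
  "hconcat m G B = (\<lambda>i j. if j < m then G i j else B i (j - m))"

end

theory Submission
  imports Defs "HOL-Library.Z2"
begin

text \<open>A generator matrix of a \<open>t\<close>-CIS \<open>[tk,k]\<close> code can be permuted so that its last \<open>k\<close>
  columns form one of the information sets. Its first \<open>(t-1)k\<close> columns then generate a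
  \<open>(t-1)\<close>-CIS code, equivalent to the code of some \<open>G \<in> S\<close>, and its last block is an invertible
  matrix \<open>X\<close>. Replacing the left block by \<open>G\<close> is a change of basis of the code that only turns \<open>X\<close>
  into another invertible matrix, and permuting the last \<open>k\<close> coordinates replaces that matrix by
  its \<open>\<sim>\<^sub>1\<close>-representative in \<open>R\<close>. Conversely \<open>(G | B)\<close> with \<open>B\<close> invertible is \<open>t\<close>-CIS, the last
  block being the additional information set.\<close>

section \<open>Linear algebra over GF(2)\<close>

\<comment> \<open>Keep sums in \<open>bit\<close> in ring form instead of unfolding them to xor and and.\<close>
declare add_bit_eq_xor[simp del] mult_bit_eq_and[simp del] sum_of_bool_eq[simp del]

\<comment> \<open>GF(2)-linear combinations are sums of truth values in the field \<open>bit\<close>.\<close>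
abbreviation bit_of :: "bool \<Rightarrow> bit" where
  "bit_of \<equiv> of_bool"

lemma of_nat_bit_eq_odd: "(of_nat n :: bit) = bit_of (odd n)"
  by (induct n) (auto simp: add.commute)

lemma bit_of_odd_card_eq_sum:
  assumes "finite A"
  shows "bit_of (odd (card {x\<in>A. P x})) = (\<Sum>x\<in>A. bit_of (P x))"
proof -
  have "card {x\<in>A. P x} = (\<Sum>x\<in>A. of_bool (P x) :: nat)"
    using assms by (simp add: sum_of_bool_eq Int_def conj_commute)
  then show ?thesis
    by (simp add: of_nat_bit_eq_odd[symmetric] of_nat_sum del: sum_of_bool_eq)
qed

lemma even_card_iff_sum_eq_0:
  "finite A \<Longrightarrow> even (card {x\<in>A. P x}) \<longleftrightarrow> (\<Sum>x\<in>A. bit_of (P x)) = 0"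
  using bit_of_odd_card_eq_sum[of A P] by (cases "odd (card {x\<in>A. P x})") auto

lemma bit_add_self [simp]: "(x::bit) + x = 0"
  by (simp add: add_bit_eq_xor)

lemma bit_eq_iff_eq_one: "(x::bit) = y \<longleftrightarrow> (x = 1 \<longleftrightarrow> y = 1)"
  by (cases x; cases y) simp_all

lemma sum_bit_symmetric_difference:
  fixes g :: "'a \<Rightarrow> bit"
  assumes "finite A" "finite B"
  shows "(\<Sum>x\<in>(A - B) \<union> (B - A). g x) = sum g A + sum g B"
proof -
  have "sum g A = sum g (A \<inter> B) + sum g (A - B)" "sum g B = sum g (A \<inter> B) + sum g (B - A)"
    using assms sum.Int_Diff[of A g B] sum.Int_Diff[of B g A] by (simp_all add: Int_commute)
  moreover have "(\<Sum>x\<in>(A - B) \<union> (B - A). g x) = sum g (A - B) + sum g (B - A)"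
    using assms by (intro sum.union_disjoint) auto
  ultimately show ?thesis
    by (simp add: ac_simps)
qed

definition lin_indep_cols :: "('a \<Rightarrow> 'b \<Rightarrow> bool) \<Rightarrow> 'a set \<Rightarrow> 'b set \<Rightarrow> bool" where
  "lin_indep_cols M A B \<longleftrightarrow> (\<forall>J\<subseteq>B. (\<forall>i\<in>A. (\<Sum>j\<in>J. bit_of (M i j)) = 0) \<longrightarrow> J = {})"

lemma lin_indep_colsD:
  assumes "lin_indep_cols M A B" "J \<subseteq> B" "\<And>i. i \<in> A \<Longrightarrow> (\<Sum>j\<in>J. bit_of (M i j)) = 0"
  shows "J = {}"
  using assms unfolding lin_indep_cols_def by blast

text \<open>For a square matrix, injectivity of \<open>J \<mapsto> \<Sum>j\<in>J. column j\<close> on subsets gives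
  surjectivity onto all vectors, since both sides have the same number of elements.\<close>

lemma lin_indep_cols_imp_span:
  fixes M :: "'a \<Rightarrow> 'b \<Rightarrow> bool"
  assumes "finite A" "finite B" "card A = card B" and indep: "lin_indep_cols M A B"
    and "T \<subseteq> A"
  shows "\<exists>J\<subseteq>B. \<forall>i\<in>A. (\<Sum>j\<in>J. bit_of (M i j)) = bit_of (i \<in> T)"
proof -
  define support where "support J = {i\<in>A. (\<Sum>j\<in>J. bit_of (M i j)) = 1}" for J
  have "inj_on support (Pow B)"
  proof (rule inj_onI)
    fix J1 J2 assume J: "J1 \<in> Pow B" "J2 \<in> Pow B" and eq: "support J1 = support J2"
    have fin: "finite J1" "finite J2"
      using J \<open>finite B\<close> by (auto intro: finite_subset)
    have "(\<Sum>j\<in>J1. bit_of (M i j)) = (\<Sum>j\<in>J2. bit_of (M i j))" if "i \<in> A" for i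
      using eq that unfolding support_def set_eq_iff by (intro bit_eq_iff_eq_one[THEN iffD2]) blast
    then have "\<forall>i\<in>A. (\<Sum>j\<in>(J1 - J2) \<union> (J2 - J1). bit_of (M i j)) = 0"
      by (simp add: sum_bit_symmetric_difference[OF fin])
    moreover have "(J1 - J2) \<union> (J2 - J1) \<subseteq> B"
      using J by auto
    ultimately have "(J1 - J2) \<union> (J2 - J1) = {}"
      by (intro lin_indep_colsD[OF indep]) auto
    then show "J1 = J2" by blast
  qed
  then have "card (support ` Pow B) = card (Pow A)"
    using assms by (simp add: card_image card_Pow)
  moreover have "support ` Pow B \<subseteq> Pow A"
    unfolding support_def by auto
  ultimately have "support ` Pow B = Pow A"
    using \<open>finite A\<close> by (intro card_subset_eq) auto
  then obtain J where "J \<subseteq> B" "support J = T"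
    using \<open>T \<subseteq> A\<close> by (metis Pow_iff imageE)
  moreover have "(\<Sum>j\<in>J. bit_of (M i j)) = bit_of (i \<in> T)" if "i \<in> A" "support J = T" for i
    using that unfolding support_def by (cases "\<Sum>j\<in>J. bit_of (M i j)") auto
  ultimately show ?thesis by blast
qed

lemma lin_indep_cols_transpose:
  fixes M :: "'a \<Rightarrow> 'b \<Rightarrow> bool"
  assumes "finite A" "finite B" "card A = card B" and indep: "lin_indep_cols M A B"
  shows "lin_indep_cols (\<lambda>j i. M i j) B A"
  unfolding lin_indep_cols_def
proof (intro allI impI)
  fix T assume T: "T \<subseteq> A" and zero: "\<forall>j\<in>B. (\<Sum>i\<in>T. bit_of (M i j)) = 0"
  show "T = {}"
  proof (rule ccontr)
    assume "T \<noteq> {}"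
    then obtain i0 where "i0 \<in> T" by auto
    then obtain J where J: "J \<subseteq> B" "\<forall>i\<in>A. (\<Sum>j\<in>J. bit_of (M i j)) = bit_of (i \<in> {i0})"
      using lin_indep_cols_imp_span[OF assms, of "{i0}"] T by auto
    have "(\<Sum>i\<in>T. \<Sum>j\<in>J. bit_of (M i j)) = (\<Sum>i\<in>T. bit_of (i = i0))"
      using J T by (intro sum.cong) auto
    also have "\<dots> = 1"
      using \<open>i0 \<in> T\<close> T \<open>finite A\<close> by (simp add: of_bool_def sum.delta finite_subset)
    finally have "(\<Sum>j\<in>J. \<Sum>i\<in>T. bit_of (M i j)) = 1"
      by (simp add: sum.swap[of _ T])
    moreover have "(\<Sum>j\<in>J. \<Sum>i\<in>T. bit_of (M i j)) = 0"
      using zero J by (intro sum.neutral) auto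
    ultimately show False by simp
  qed
qed

lemma cols_indep_iff_lin_indep_cols:
  assumes "finite I"
  shows "cols_indep k G I \<longleftrightarrow> lin_indep_cols G {..<k} I"
proof -
  have "(\<forall>i<k. even (card {j\<in>J. G i j})) \<longleftrightarrow> (\<forall>i\<in>{..<k}. (\<Sum>j\<in>J. bit_of (G i j)) = 0)"
    if "J \<subseteq> I" for J
    using finite_subset[OF that assms] by (auto simp: even_card_iff_sum_eq_0)
  then show ?thesis
    unfolding cols_indep_def lin_indep_cols_def by blast
qed

lemma rows_indep_iff_lin_indep_cols:
  "rows_indep k n G \<longleftrightarrow> lin_indep_cols (\<lambda>j i. G i j) {..<n} {..<k}"
proof -
  have "(\<forall>j<n. even (card {i\<in>T. G i j})) \<longleftrightarrow> (\<forall>j\<in>{..<n}. (\<Sum>i\<in>T. bit_of (G i j)) = 0)"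
    if "T \<subseteq> {..<k}" for T
    using finite_subset[OF that] by (auto simp: even_card_iff_sum_eq_0)
  then show ?thesis
    unfolding rows_indep_def lin_indep_cols_def by blast
qed

lemma bit_of_bmult: "bit_of (bmult k A B i j) = (\<Sum>l<k. bit_of (A i l) * bit_of (B l j))"
  unfolding bmult_def by (subst bit_of_odd_card_eq_sum) (auto simp: of_bool_conj)

lemma bmult_assoc: "bmult k (bmult k A B) C i j = bmult k A (bmult k B C) i j"
proof -
  have "bit_of (bmult k (bmult k A B) C i j)
      = (\<Sum>l<k. \<Sum>m<k. bit_of (A i m) * bit_of (B m l) * bit_of (C l j))"
    by (simp only: bit_of_bmult sum_distrib_right)
  also have "\<dots> = (\<Sum>m<k. \<Sum>l<k. bit_of (A i m) * bit_of (B m l) * bit_of (C l j))"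
    by (rule sum.swap)
  also have "\<dots> = bit_of (bmult k A (bmult k B C) i j)"
    by (simp only: bit_of_bmult sum_distrib_left mult.assoc)
  finally show ?thesis
    by (simp add: of_bool_eq_iff)
qed

lemma bmult_cong:
  assumes "mat_eq k A A'" "mat_eq k B B'"
  shows "mat_eq k (bmult k A B) (bmult k A' B')"
proof -
  have "{l\<in>{..<k}. A i l \<and> B l j} = {l\<in>{..<k}. A' i l \<and> B' l j}" if "i < k" "j < k" for i j
    using assms that unfolding mat_eq_def by auto
  then show ?thesis
    unfolding mat_eq_def bmult_def by simp
qed

lemma bmult_bid_right: "mat_eq k (bmult k A bid) A"
proof -
  have "{l\<in>{..<k}. A i l \<and> bid l j} = (if A i j then {j} else {})" if "j < k" for i j
    using that by (auto simp: bid_def)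
  then show ?thesis
    unfolding mat_eq_def bmult_def by simp
qed

lemma bmult_bid_left: "mat_eq k (bmult k bid A) A"
proof -
  have "{l\<in>{..<k}. bid i l \<and> A l j} = (if A i j then {i} else {})" if "i < k" for i j
    using that by (auto simp: bid_def)
  then show ?thesis
    unfolding mat_eq_def bmult_def by simp
qed

lemma in_GL_imp_cols_indep:
  assumes "in_GL k A"
  shows "cols_indep k A {..<k}"
  unfolding cols_indep_iff_lin_indep_cols[OF finite_lessThan] lin_indep_cols_def
proof (intro allI impI)
  fix J assume J: "J \<subseteq> {..<k}" and zero: "\<forall>l\<in>{..<k}. (\<Sum>j\<in>J. bit_of (A l j)) = 0"
  obtain A' where A': "mat_eq k (bmult k A' A) bid"
    using assms unfolding in_GL_def by auto
  have "(\<Sum>j\<in>J. bit_of (bid i j)) = 0" if "i < k" for i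
  proof -
    have "(\<Sum>j\<in>J. bit_of (bid i j)) = (\<Sum>j\<in>J. \<Sum>l<k. bit_of (A' i l) * bit_of (A l j))"
      using A' J that unfolding mat_eq_def by (intro sum.cong) (auto simp flip: bit_of_bmult)
    also have "\<dots> = (\<Sum>l<k. bit_of (A' i l) * (\<Sum>j\<in>J. bit_of (A l j)))"
      by (simp add: sum.swap[of _ J] sum_distrib_left)
    finally show ?thesis
      using zero by simp
  qed
  moreover have "(\<Sum>j\<in>J. bit_of (bid i j)) = 1" if "i \<in> J" for i
    using that J by (simp add: bid_def of_bool_def sum.delta finite_subset)
  ultimately show "J = {}"
    using J by force
qed

lemma cols_indep_imp_right_inverse:
  assumes "cols_indep k A {..<k}"
  shows "\<exists>B. mat_eq k (bmult k A B) bid"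
proof -
  have "\<exists>J\<subseteq>{..<k}. \<forall>i\<in>{..<k}. (\<Sum>j\<in>J. bit_of (A i j)) = bit_of (i \<in> {c})" if "c < k" for c
    using assms that
    by (intro lin_indep_cols_imp_span) (auto simp: cols_indep_iff_lin_indep_cols)
  then obtain J where J: "\<And>c. c < k \<Longrightarrow> J c \<subseteq> {..<k} \<and>
      (\<forall>i\<in>{..<k}. (\<Sum>j\<in>J c. bit_of (A i j)) = bit_of (i \<in> {c}))"
    by metis
  have "bmult k A (\<lambda>j c. j \<in> J c) i c = bid i c" if "i < k" "c < k" for i c
  proof -
    have "bit_of (bmult k A (\<lambda>j c. j \<in> J c) i c) = (\<Sum>l<k. if l \<in> J c then bit_of (A i l) else 0)"
      unfolding bit_of_bmult by (rule sum.cong) auto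
    also have "\<dots> = (\<Sum>j\<in>J c. bit_of (A i j))"
      using J[OF \<open>c < k\<close>] by (simp add: sum.inter_restrict[symmetric] Int_absorb1)
    finally show ?thesis
      using J that by (auto simp: bid_def of_bool_eq_iff)
  qed
  then show ?thesis
    unfolding mat_eq_def by blast
qed

lemma cols_indep_imp_in_GL:
  assumes "cols_indep k A {..<k}"
  shows "in_GL k A"
proof -
  obtain B where B: "mat_eq k (bmult k A B) bid"
    using cols_indep_imp_right_inverse[OF assms] by blast
  have "cols_indep k (\<lambda>i j. A j i) {..<k}"
    using assms lin_indep_cols_transpose[of "{..<k}" "{..<k}" A]
    by (simp add: cols_indep_iff_lin_indep_cols)
  then obtain C' where C': "mat_eq k (bmult k (\<lambda>i j. A j i) C') bid"
    using cols_indep_imp_right_inverse by blast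
  define C where "C i j = C' j i" for i j
  have "bmult k C A i j = bmult k (\<lambda>i j. A j i) C' j i" for i j
    unfolding bmult_def C_def by (simp add: conj_commute)
  then have C: "mat_eq k (bmult k C A) bid"
    using C' unfolding mat_eq_def bid_def by auto
  have "B i j = C i j" if "i < k" "j < k" for i j \<comment> \<open>\<open>B = (C A) B = C (A B) = C\<close>\<close>
  proof -
    have "B i j = bmult k (bmult k C A) B i j"
      using bmult_cong[OF C, of B B] bmult_bid_left[of k B] that unfolding mat_eq_def by simp
    also have "\<dots> = bmult k C (bmult k A B) i j"
      by (rule bmult_assoc)
    also have "\<dots> = C i j"
      using bmult_cong[OF _ B, of C C] bmult_bid_right[of k C] that unfolding mat_eq_def by simp
    finally show ?thesis .
  qed
  then have "mat_eq k (bmult k B A) bid"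
    using bmult_cong[of k B C A A] C unfolding mat_eq_def by simp
  then show ?thesis
    using B unfolding in_GL_def by blast
qed

lemma in_GL_iff_cols_indep: "in_GL k A \<longleftrightarrow> cols_indep k A {..<k}"
  using in_GL_imp_cols_indep cols_indep_imp_in_GL by blast

section \<open>Codes and information sets\<close>

definition row_sum :: "nat \<Rightarrow> bmat \<Rightarrow> nat set \<Rightarrow> word" where
  "row_sum n G T = (\<lambda>j. j < n \<and> odd (card {i\<in>T. G i j}))"

lemma code_of_eq_image_row_sum: "code_of k n G = row_sum n G ` Pow {..<k}"
  unfolding code_of_def row_sum_def by auto

lemma finite_code_of: "finite (code_of k n G)"
  unfolding code_of_eq_image_row_sum by simp

lemma inj_on_row_sum:
  assumes "rows_indep k n G"
  shows "inj_on (row_sum n G) (Pow {..<k})"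
proof (rule inj_onI)
  fix T1 T2 assume T: "T1 \<in> Pow {..<k}" "T2 \<in> Pow {..<k}" and eq: "row_sum n G T1 = row_sum n G T2"
  have fin: "finite T1" "finite T2"
    using T by (auto intro: finite_subset)
  have "(\<Sum>i\<in>T1. bit_of (G i j)) = (\<Sum>i\<in>T2. bit_of (G i j))" if "j < n" for j
    using fun_cong[OF eq, of j] that
    by (simp add: row_sum_def bit_of_odd_card_eq_sum[OF fin(1), symmetric]
        bit_of_odd_card_eq_sum[OF fin(2), symmetric])
  then have "\<forall>j\<in>{..<n}. (\<Sum>i\<in>(T1 - T2) \<union> (T2 - T1). bit_of (G i j)) = 0"
    by (simp add: sum_bit_symmetric_difference[OF fin])
  moreover have "(T1 - T2) \<union> (T2 - T1) \<subseteq> {..<k}"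
    using T by auto
  ultimately have "(T1 - T2) \<union> (T2 - T1) = {}"
    using assms unfolding rows_indep_iff_lin_indep_cols by (intro lin_indep_colsD) auto
  then show "T1 = T2" by blast
qed

lemma card_code_of: "rows_indep k n G \<Longrightarrow> card (code_of k n G) = 2 ^ k"
  unfolding code_of_eq_image_row_sum by (simp add: card_image inj_on_row_sum card_Pow)

lemma code_of_cong:
  assumes "\<forall>i<k. \<forall>j<n. G i j = G' i j"
  shows "code_of k n G = code_of k n G'"
proof -
  have "row_sum n G T = row_sum n G' T" if "T \<subseteq> {..<k}" for T
  proof
    fix j
    have "j < n \<Longrightarrow> {i\<in>T. G i j} = {i\<in>T. G' i j}"
      using assms that by auto
    then show "row_sum n G T j = row_sum n G' T j"
      unfolding row_sum_def by auto
  qed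
  then show ?thesis
    unfolding code_of_eq_image_row_sum by (auto intro!: image_cong)
qed

text \<open>Whether \<open>I\<close> is an information set depends only on the code: for \<open>card I = k\<close> it
  means that no nonzero codeword vanishes on \<open>I\<close>.\<close>

definition zero_determining :: "word set \<Rightarrow> nat set \<Rightarrow> bool" where
  "zero_determining C I \<longleftrightarrow> (\<forall>w\<in>C. (\<forall>j\<in>I. \<not> w j) \<longrightarrow> (\<forall>j. \<not> w j))"

lemma lin_indep_cols_transpose_iff_zero_determining:
  assumes "rows_indep k n G" and "I \<subseteq> {..<n}"
  shows "lin_indep_cols (\<lambda>j i. G i j) I {..<k} \<longleftrightarrow> zero_determining (code_of k n G) I"
proof
  assume indep: "lin_indep_cols (\<lambda>j i. G i j) I {..<k}"
  show "zero_determining (code_of k n G) I"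
    unfolding zero_determining_def code_of_eq_image_row_sum
  proof (intro ballI impI allI)
    fix w j assume "w \<in> row_sum n G ` Pow {..<k}" and zero: "\<forall>j\<in>I. \<not> w j"
    then obtain T where T: "T \<subseteq> {..<k}" "w = row_sum n G T" by auto
    then have "\<forall>j\<in>I. (\<Sum>i\<in>T. bit_of (G i j)) = 0"
      using zero \<open>I \<subseteq> {..<n}\<close> finite_subset[OF T(1)]
      by (auto simp: row_sum_def even_card_iff_sum_eq_0[symmetric])
    then have "T = {}"
      using lin_indep_colsD[OF indep T(1)] by simp
    then show "\<not> w j"
      using T unfolding row_sum_def by simp
  qed
next
  assume zd: "zero_determining (code_of k n G) I"
  show "lin_indep_cols (\<lambda>j i. G i j) I {..<k}"
    unfolding lin_indep_cols_def
  proof (intro allI impI)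
    fix T assume T: "T \<subseteq> {..<k}" and zero: "\<forall>j\<in>I. (\<Sum>i\<in>T. bit_of (G i j)) = 0"
    have "row_sum n G T \<in> code_of k n G"
      using T unfolding code_of_eq_image_row_sum by auto
    moreover have "\<forall>j\<in>I. \<not> row_sum n G T j"
      using zero finite_subset[OF T] by (auto simp: row_sum_def even_card_iff_sum_eq_0)
    ultimately have "\<not> row_sum n G T j" for j
      using zd unfolding zero_determining_def by blast
    then have "\<forall>j\<in>{..<n}. (\<Sum>i\<in>T. bit_of (G i j)) = 0"
      using finite_subset[OF T] by (auto simp: row_sum_def even_card_iff_sum_eq_0)
    then show "T = {}"
      using lin_indep_colsD assms(1) T unfolding rows_indep_iff_lin_indep_cols by metis
  qed
qed

lemma cols_indep_iff_zero_determining: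
  assumes "rows_indep k n G" "I \<subseteq> {..<n}" "card I = k"
  shows "cols_indep k G I \<longleftrightarrow> zero_determining (code_of k n G) I"
proof -
  have "finite I"
    using assms(2) by (rule finite_subset) simp
  then have "cols_indep k G I \<longleftrightarrow> lin_indep_cols (\<lambda>j i. G i j) I {..<k}"
    using lin_indep_cols_transpose[of "{..<k}" I G] lin_indep_cols_transpose[of I "{..<k}" "\<lambda>j i. G i j"]
      assms(3) by (auto simp: cols_indep_iff_lin_indep_cols)
  also have "\<dots> \<longleftrightarrow> zero_determining (code_of k n G) I"
    using assms(1,2) by (rule lin_indep_cols_transpose_iff_zero_determining)
  finally show ?thesis .
qed

lemma cols_indep_imp_rows_indep:
  assumes "cols_indep k G I" "I \<subseteq> {..<n}" "card I = k"
  shows "rows_indep k n G"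
proof -
  have "finite I"
    using assms(2) by (rule finite_subset) simp
  then have "lin_indep_cols (\<lambda>j i. G i j) I {..<k}"
    using assms lin_indep_cols_transpose[of "{..<k}" I G] by (simp add: cols_indep_iff_lin_indep_cols)
  then show ?thesis
    using assms(2) unfolding rows_indep_iff_lin_indep_cols lin_indep_cols_def by blast
qed

lemma info_set_iff_zero_determining:
  assumes "gen_matrix n k C G"
  shows "info_set n k C I \<longleftrightarrow> I \<subseteq> {..<n} \<and> card I = k \<and> zero_determining C I"
  using assms cols_indep_iff_zero_determining
  unfolding info_set_def gen_matrix_def by metis

lemma info_set_iff_cols_indep:
  assumes "gen_matrix n k C G"
  shows "info_set n k C I \<longleftrightarrow> I \<subseteq> {..<n} \<and> card I = k \<and> cols_indep k G I"
  using assms cols_indep_iff_zero_determining info_set_iff_zero_determining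
  unfolding gen_matrix_def by metis

section \<open>Permuting coordinates\<close>

lemma code_of_permute_cols:
  assumes "\<sigma> permutes {..<n}"
  shows "code_of k n (\<lambda>i j. G i (\<sigma> j)) = (\<lambda>w. w \<circ> \<sigma>) ` code_of k n G"
proof -
  have "row_sum n (\<lambda>i j. G i (\<sigma> j)) T = row_sum n G T \<circ> \<sigma>" for T
    unfolding row_sum_def using permutes_in_image[OF assms] by (auto simp: fun_eq_iff)
  then show ?thesis
    unfolding code_of_eq_image_row_sum by (auto simp: image_image)
qed

lemma rows_indep_permute_cols:
  assumes "\<sigma> permutes {..<n}" "rows_indep k n G"
  shows "rows_indep k n (\<lambda>i j. G i (\<sigma> j))"
  unfolding rows_indep_def
proof (intro allI impI)
  fix T assume T: "T \<subseteq> {..<k}" and even: "\<forall>j<n. even (card {i\<in>T. G i (\<sigma> j)})"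
  have "even (card {i\<in>T. G i j})" if "j < n" for j
    using even permutes_in_image[OF permutes_inv[OF assms(1)]] that
    by (metis lessThan_iff permutes_inverses(1)[OF assms(1)])
  then show "T = {}"
    using assms(2) T unfolding rows_indep_def by blast
qed

lemma zero_determining_permute:
  assumes "\<sigma> permutes A" "zero_determining C I"
  shows "zero_determining ((\<lambda>w. w \<circ> \<sigma>) ` C) (inv \<sigma> ` I)"
  using assms unfolding zero_determining_def
  by (simp add: permutes_inverses(1)[OF assms(1)]) (metis surj_def permutes_surj[OF assms(1)])

lemma info_set_permute:
  assumes "\<sigma> permutes {..<n}" "info_set n k C I"
  shows "info_set n k ((\<lambda>w. w \<circ> \<sigma>) ` C) (inv \<sigma> ` I)"
proof -
  obtain G where G: "gen_matrix n k C G"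
    using assms(2) unfolding info_set_def by blast
  then have "gen_matrix n k ((\<lambda>w. w \<circ> \<sigma>) ` C) (\<lambda>i j. G i (\<sigma> j))"
    using assms(1) rows_indep_permute_cols code_of_permute_cols unfolding gen_matrix_def by metis
  moreover have "inv \<sigma> ` I \<subseteq> {..<n}"
    using assms(2) permutes_image[OF permutes_inv[OF assms(1)]] unfolding info_set_def by blast
  moreover have "card (inv \<sigma> ` I) = card I"
    using permutes_inj[OF permutes_inv[OF assms(1)]] by (simp add: card_image inj_on_subset)
  ultimately show ?thesis
    using assms info_set_iff_zero_determining[OF G] zero_determining_permute
    by (simp add: info_set_iff_zero_determining)
qed

lemma equivp_code_equiv: "equivp (code_equiv n)"
proof (rule equivpI)
  show "reflp (code_equiv n)"
    unfolding reflp_def code_equiv_def by (intro allI exI[of _ id]) (simp add: permutes_id)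
  show "symp (code_equiv n)"
  proof (rule sympI)
    fix C D assume "code_equiv n C D"
    then obtain \<sigma> where \<sigma>: "\<sigma> permutes {..<n}" "D = (\<lambda>w. w \<circ> \<sigma>) ` C"
      unfolding code_equiv_def by blast
    have "w \<circ> \<sigma> \<circ> inv \<sigma> = w" for w :: word
      by (simp add: fun_eq_iff permutes_inverses(1)[OF \<sigma>(1)])
    then have "C = (\<lambda>w. w \<circ> inv \<sigma>) ` D"
      unfolding \<sigma>(2) image_image by simp
    then show "code_equiv n D C"
      using permutes_inv[OF \<sigma>(1)] unfolding code_equiv_def by blast
  qed
  show "transp (code_equiv n)"
  proof (rule transpI)
    fix C D E assume "code_equiv n C D" "code_equiv n D E"
    then obtain \<sigma> \<rho> where "\<sigma> permutes {..<n}" "D = (\<lambda>w. w \<circ> \<sigma>) ` C"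
      "\<rho> permutes {..<n}" "E = (\<lambda>w. w \<circ> \<rho>) ` D"
      unfolding code_equiv_def by blast
    moreover have "(\<lambda>w. w \<circ> \<rho>) ` (\<lambda>w. w \<circ> \<sigma>) ` C = (\<lambda>w. w \<circ> (\<sigma> \<circ> \<rho>)) ` C"
      unfolding image_image o_assoc ..
    ultimately show "code_equiv n C E"
      unfolding code_equiv_def using permutes_compose by metis
  qed
qed

lemma code_equiv_sym: "code_equiv n C D \<Longrightarrow> code_equiv n D C"
  using equivp_symp[OF equivp_code_equiv] .

lemma code_equiv_trans: "code_equiv n C D \<Longrightarrow> code_equiv n D E \<Longrightarrow> code_equiv n C E"
  using equivp_transp[OF equivp_code_equiv] .

section \<open>Concatenated generator matrices\<close>

lemma lin_indep_cols_cong: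
  assumes "\<forall>i\<in>A. \<forall>j\<in>B. M i j = M' i j"
  shows "lin_indep_cols M A B \<longleftrightarrow> lin_indep_cols M' A B"
proof -
  have "J \<subseteq> B \<Longrightarrow> i \<in> A \<Longrightarrow> (\<Sum>j\<in>J. bit_of (M i j)) = (\<Sum>j\<in>J. bit_of (M' i j))" for i J
    using assms by (intro sum.cong) auto
  then show ?thesis
    unfolding lin_indep_cols_def by simp
qed

lemma lin_indep_cols_reindex:
  assumes "inj_on f B"
  shows "lin_indep_cols M A (f ` B) \<longleftrightarrow> lin_indep_cols (\<lambda>i j. M i (f j)) A B"
proof -
  have sum_eq: "(\<Sum>j\<in>f ` J. bit_of (M i j)) = (\<Sum>j\<in>J. bit_of (M i (f j)))" if "J \<subseteq> B" for i J
    using sum.reindex[OF inj_on_subset[OF assms that]] by simp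
  show ?thesis
  proof
    assume indep: "lin_indep_cols M A (f ` B)"
    show "lin_indep_cols (\<lambda>i j. M i (f j)) A B"
      unfolding lin_indep_cols_def
    proof (intro allI impI)
      fix J assume J: "J \<subseteq> B" "\<forall>i\<in>A. (\<Sum>j\<in>J. bit_of (M i (f j))) = 0"
      have "f ` J = {}"
        using J by (intro lin_indep_colsD[OF indep]) (auto simp: sum_eq)
      then show "J = {}" by simp
    qed
  next
    assume indep: "lin_indep_cols (\<lambda>i j. M i (f j)) A B"
    show "lin_indep_cols M A (f ` B)"
      unfolding lin_indep_cols_def
    proof (intro allI impI)
      fix J assume J: "J \<subseteq> f ` B" "\<forall>i\<in>A. (\<Sum>j\<in>J. bit_of (M i j)) = 0"
      define J' where "J' = {x\<in>B. f x \<in> J}"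
      have J': "f ` J' = J" "J' \<subseteq> B"
        using J(1) unfolding J'_def by auto
      then have "J' = {}"
        using J(2) by (intro lin_indep_colsD[OF indep]) (auto simp flip: sum_eq)
      then show "J = {}"
        using J' by simp
    qed
  qed
qed

lemma cols_indep_cong:
  assumes "\<forall>i<k. \<forall>j\<in>I. G i j = G' i j"
  shows "cols_indep k G I \<longleftrightarrow> cols_indep k G' I"
proof -
  have "J \<subseteq> I \<Longrightarrow> i < k \<Longrightarrow> {j\<in>J. G i j} = {j\<in>J. G' i j}" for i J
    using assms by auto
  then show ?thesis
    unfolding cols_indep_def by simp
qed

lemma cols_indep_shift:
  assumes "\<forall>i<k. \<forall>j<k. G i (m + j) = B i j"
  shows "cols_indep k G {m..<m + k} \<longleftrightarrow> cols_indep k B {..<k}"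
proof -
  have "{m..<m + k} = (+) m ` {..<k}"
    by (simp add: lessThan_atLeast0 add.commute)
  then have "cols_indep k G {m..<m + k} \<longleftrightarrow> lin_indep_cols (\<lambda>i j. G i (m + j)) {..<k} {..<k}"
    by (simp add: cols_indep_iff_lin_indep_cols lin_indep_cols_reindex)
  also have "\<dots> \<longleftrightarrow> cols_indep k B {..<k}"
    using assms by (simp add: cols_indep_iff_lin_indep_cols lin_indep_cols_cong)
  finally show ?thesis .
qed

lemma rows_indep_hconcat:
  assumes "rows_indep k m G" "m \<le> n"
  shows "rows_indep k n (hconcat m G B)"
  unfolding rows_indep_def
proof (intro allI impI)
  fix T assume T: "T \<subseteq> {..<k}" and even: "\<forall>j<n. even (card {i\<in>T. hconcat m G B i j})"
  have "even (card {i\<in>T. G i j})" if "j < m" for j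
    using even[rule_format, of j] that assms(2) by (simp add: hconcat_def)
  then show "T = {}"
    using assms(1) T unfolding rows_indep_def by blast
qed

lemma row_sum_bmult:
  assumes "U \<subseteq> {..<k}"
  shows "row_sum n (bmult k M G) U = row_sum n G {l\<in>{..<k}. odd (card {i\<in>U. M i l})}"
proof
  fix j
  define V where "V = {l\<in>{..<k}. odd (card {i\<in>U. M i l})}"
  have fin: "finite U" "finite V"
    using assms finite_subset unfolding V_def by auto
  have "bit_of (odd (card {i\<in>U. bmult k M G i j}))
      = (\<Sum>i\<in>U. \<Sum>l<k. bit_of (M i l) * bit_of (G l j))"
    by (simp add: bit_of_odd_card_eq_sum[OF fin(1)] bit_of_bmult)
  also have "\<dots> = (\<Sum>l<k. bit_of (odd (card {i\<in>U. M i l})) * bit_of (G l j))"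
    by (simp add: sum.swap[of _ U] sum_distrib_right bit_of_odd_card_eq_sum[OF fin(1)])
  also have "\<dots> = (\<Sum>l<k. if odd (card {i\<in>U. M i l}) then bit_of (G l j) else 0)"
    by (intro sum.cong) auto
  also have "\<dots> = (\<Sum>l\<in>V. bit_of (G l j))"
    unfolding V_def by (rule sum.inter_filter[symmetric]) simp
  also have "\<dots> = bit_of (odd (card {l\<in>V. G l j}))"
    by (simp add: bit_of_odd_card_eq_sum[OF fin(2)])
  finally show "row_sum n (bmult k M G) U j = row_sum n G V j"
    unfolding row_sum_def by (simp add: of_bool_eq_iff)
qed

lemma code_of_bmult_subset: "code_of k n (bmult k M G) \<subseteq> code_of k n G"
  unfolding code_of_eq_image_row_sum by (auto simp: row_sum_bmult)

lemma exists_bmult_eq_if_code_of_subset: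
  assumes "code_of k m G \<subseteq> code_of k m K"
  shows "\<exists>M. \<forall>i<k. \<forall>j<m. G i j = bmult k M K i j"
proof -
  have "\<exists>T\<subseteq>{..<k}. row_sum m G {i} = row_sum m K T" if "i < k" for i
    using assms that unfolding code_of_eq_image_row_sum by blast
  then obtain T where T: "\<And>i. i < k \<Longrightarrow> T i \<subseteq> {..<k} \<and> row_sum m G {i} = row_sum m K (T i)"
    by metis
  have "G i j = bmult k (\<lambda>i l. l \<in> T i) K i j" if "i < k" "j < m" for i j
  proof -
    have "{i'\<in>{i}. G i' j} = (if G i j then {i} else {})"
      by auto
    then have "G i j = row_sum m G {i} j"
      using \<open>j < m\<close> unfolding row_sum_def by simp
    also have "\<dots> = row_sum m K (T i) j"
      using T[OF \<open>i < k\<close>] by simp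
    also have "\<dots> = odd (card {l\<in>T i. K l j})"
      using \<open>j < m\<close> unfolding row_sum_def by simp
    also have "{l\<in>T i. K l j} = {l\<in>{..<k}. l \<in> T i \<and> K l j}"
      using T[OF \<open>i < k\<close>] by auto
    finally show ?thesis
      unfolding bmult_def .
  qed
  then show ?thesis by blast
qed

text \<open>Replacing the left block by another generator matrix of the same code amounts to a change
  of basis of the whole code, which changes the right block accordingly.\<close>

lemma code_of_hconcat_change_left:
  assumes "rows_indep k m G" "rows_indep k m K" "code_of k m G = code_of k m K" "m \<le> n"
  shows "\<exists>X. code_of k n (hconcat m K Y) = code_of k n (hconcat m G X)"
proof -
  obtain M where M: "\<forall>i<k. \<forall>j<m. G i j = bmult k M K i j"
    using exists_bmult_eq_if_code_of_subset assms(3) by blast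
  have "\<forall>i<k. \<forall>j<n. hconcat m G (bmult k M Y) i j = bmult k M (hconcat m K Y) i j"
    using M by (simp add: hconcat_def bmult_def)
  then have "code_of k n (hconcat m G (bmult k M Y)) \<subseteq> code_of k n (hconcat m K Y)"
    using code_of_cong code_of_bmult_subset by metis
  moreover have "card (code_of k n (hconcat m G (bmult k M Y))) = card (code_of k n (hconcat m K Y))"
    using assms by (simp add: card_code_of rows_indep_hconcat)
  ultimately show ?thesis
    using card_subset_eq[OF finite_code_of] by metis
qed

lemma permutes_shift:
  fixes m k :: nat
  assumes "\<pi> permutes {..<k}"
  shows "(\<lambda>j. if m \<le> j \<and> j < m + k then m + \<pi> (j - m) else j) permutes {m..<m + k}"
proof -
  have to_0: "bij_betw (\<lambda>j. j - m) {m..<m + k} {..<k}"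
    by (rule bij_betwI[where g = "(+) m"]) (auto simp: Pi_iff)
  have from_0: "bij_betw ((+) m) {..<k} {m..<m + k}"
    by (rule bij_betwI[where g = "\<lambda>j. j - m"]) (auto simp: Pi_iff)
  have "bij_betw ((+) m \<circ> (\<pi> \<circ> (\<lambda>j. j - m))) {m..<m + k} {m..<m + k}"
    by (rule bij_betw_trans[OF bij_betw_trans[OF to_0 permutes_imp_bij[OF assms]] from_0])
  then have "bij_betw (\<lambda>j. if m \<le> j \<and> j < m + k then m + \<pi> (j - m) else j) {m..<m + k} {m..<m + k}"
    by (rule bij_betw_cong[THEN iffD1, rotated]) auto
  then show ?thesis
    by (rule bij_imp_permutes) auto
qed

lemma code_equiv_hconcat_sim1:
  assumes "sim1 k X B"
  shows "code_equiv (m + k) (code_of k (m + k) (hconcat m G B)) (code_of k (m + k) (hconcat m G X))"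
proof -
  obtain \<pi> where \<pi>: "\<pi> permutes {..<k}" "\<forall>i<k. \<forall>j<k. X i j = B i (\<pi> j)"
    using assms unfolding sim1_def by blast
  define \<sigma> where "\<sigma> j = (if m \<le> j \<and> j < m + k then m + \<pi> (j - m) else j)" for j
  have \<sigma>: "\<sigma> permutes {..<m + k}"
    unfolding \<sigma>_def by (rule permutes_subset[OF permutes_shift[OF \<pi>(1)]]) auto
  have "hconcat m G X i j = hconcat m G B i (\<sigma> j)" if "i < k" "j < m + k" for i j
  proof (cases "j < m")
    case False
    then have "\<pi> (j - m) < k"
      using that permutes_in_image[OF \<pi>(1), of "j - m"] by simp
    then show ?thesis
      using False that \<pi>(2) by (simp add: hconcat_def \<sigma>_def)
  qed (simp add: hconcat_def \<sigma>_def)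
  then have "code_of k (m + k) (hconcat m G X) = code_of k (m + k) (\<lambda>i j. hconcat m G B i (\<sigma> j))"
    by (intro code_of_cong) blast
  also have "\<dots> = (\<lambda>w. w \<circ> \<sigma>) ` code_of k (m + k) (hconcat m G B)"
    by (rule code_of_permute_cols[OF \<sigma>])
  finally show ?thesis
    using \<sigma> unfolding code_equiv_def by blast
qed

lemma code_of_hconcat_permute_left:
  assumes "\<tau> permutes {..<m}" "m \<le> n"
  shows "code_of k n (hconcat m (\<lambda>i j. G i (\<tau> j)) B) = (\<lambda>w. w \<circ> \<tau>) ` code_of k n (hconcat m G B)"
proof -
  have "hconcat m (\<lambda>i j. G i (\<tau> j)) B = (\<lambda>i j. hconcat m G B i (\<tau> j))"
    using permutes_in_image[OF assms(1)] permutes_not_in[OF assms(1)]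
    by (auto simp: fun_eq_iff hconcat_def)
  moreover have "\<tau> permutes {..<n}"
    using permutes_subset[OF assms(1)] assms(2) by auto
  ultimately show ?thesis
    by (simp add: code_of_permute_cols)
qed

lemma info_set_last_block_iff_in_GL:
  assumes "rows_indep k m G"
  shows "info_set (m + k) k (code_of k (m + k) (hconcat m G X)) {m..<m + k} \<longleftrightarrow> in_GL k X"
proof -
  have "gen_matrix (m + k) k (code_of k (m + k) (hconcat m G X)) (hconcat m G X)"
    using rows_indep_hconcat[OF assms] unfolding gen_matrix_def by simp
  moreover have "cols_indep k (hconcat m G X) {m..<m + k} \<longleftrightarrow> in_GL k X"
    using cols_indep_shift[of k "hconcat m G X" m X] by (simp add: hconcat_def in_GL_iff_cols_indep)
  ultimately show ?thesis
    by (auto simp: info_set_iff_cols_indep)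
qed

section \<open>Codes with complementary information sets\<close>

lemma exists_permutes_image_eq:
  assumes "finite U" "A \<subseteq> U" "B \<subseteq> U" "card A = card B"
  shows "\<exists>\<sigma>. \<sigma> permutes U \<and> \<sigma> ` A = B"
proof -
  have fin: "finite A" "finite B"
    using assms finite_subset by auto
  obtain f where f: "bij_betw f A B"
    using finite_same_card_bij[OF fin assms(4)] by blast
  have "card (U - A) = card (U - B)"
    using assms fin by (simp add: card_Diff_subset)
  then obtain g where g: "bij_betw g (U - A) (U - B)"
    using finite_same_card_bij assms(1) by blast
  define \<sigma> where "\<sigma> x = (if x \<in> A then f x else if x \<in> U then g x else x)" for x
  have on_A: "bij_betw \<sigma> A B"
    using f unfolding \<sigma>_def by (rule bij_betw_cong[THEN iffD1, rotated]) simp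
  moreover have "bij_betw \<sigma> (U - A) (U - B)"
    using g unfolding \<sigma>_def by (rule bij_betw_cong[THEN iffD1, rotated]) simp
  ultimately have "bij_betw \<sigma> (A \<union> (U - A)) (B \<union> (U - B))"
    by (rule bij_betw_combine) blast
  then have "\<sigma> permutes U"
    using assms(2,3) by (intro bij_imp_permutes) (auto simp: Un_absorb1 \<sigma>_def)
  then show ?thesis
    using on_A by (auto simp: bij_betw_def)
qed

definition cis_partition :: "nat \<Rightarrow> nat \<Rightarrow> nat \<Rightarrow> word set \<Rightarrow> (nat \<Rightarrow> nat set) \<Rightarrow> bool" where
  "cis_partition t k n C I \<longleftrightarrow>
     (\<forall>s<t. info_set n k C (I s)) \<and>
     (\<forall>s<t. \<forall>s'<t. s \<noteq> s' \<longrightarrow> I s \<inter> I s' = {}) \<and>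
     (\<Union>s<t. I s) = {..<n}"

lemma is_CIS_iff_cis_partition:
  "is_CIS t k C \<longleftrightarrow> is_code (t * k) k C \<and> (\<exists>I. cis_partition t k (t * k) C I)"
  unfolding is_CIS_def cis_partition_def by blast

lemma cis_partition_hconcat:
  assumes "rows_indep k m G" "cis_partition t k m (code_of k m G) I" "in_GL k B"
  shows "cis_partition (Suc t) k (m + k) (code_of k (m + k) (hconcat m G B)) (I(t := {m..<m + k}))"
proof -
  let ?H = "hconcat m G B" and ?I = "I(t := {m..<m + k})"
  have gen: "gen_matrix (m + k) k (code_of k (m + k) ?H) ?H"
    using rows_indep_hconcat[OF assms(1)] unfolding gen_matrix_def by simp
  have I: "I s \<subseteq> {..<m}" "card (I s) = k" "cols_indep k G (I s)" if "s < t" for s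
    using assms(1,2) that info_set_iff_cols_indep[of m k _ G]
    unfolding cis_partition_def gen_matrix_def by auto
  have "info_set (m + k) k (code_of k (m + k) ?H) (I s)" if "s < t" for s
  proof -
    have "cols_indep k ?H (I s)"
      using I[OF that] by (subst cols_indep_cong) (auto simp: hconcat_def)
    then show ?thesis
      using I[OF that] by (auto simp: info_set_iff_cols_indep[OF gen])
  qed
  moreover have "info_set (m + k) k (code_of k (m + k) ?H) {m..<m + k}"
    using info_set_last_block_iff_in_GL[OF assms(1)] assms(3) by blast
  ultimately have "info_set (m + k) k (code_of k (m + k) ?H) (?I s)" if "s < Suc t" for s
    using that by (cases "s = t") auto
  moreover have "?I s \<inter> ?I s' = {}" if "s < Suc t" "s' < Suc t" "s \<noteq> s'" for s s'
  proof (cases "s = t \<or> s' = t")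
    case True
    then have "?I s \<subseteq> {..<m} \<and> ?I s' = {m..<m + k} \<or> ?I s = {m..<m + k} \<and> ?I s' \<subseteq> {..<m}"
      using that I(1) by (auto simp: less_Suc_eq)
    then show ?thesis
      by auto
  next
    case False
    then show ?thesis
      using that assms(2) unfolding cis_partition_def by auto
  qed
  moreover have "(\<Union>s<Suc t. ?I s) = {..<m} \<union> {m..<m + k}"
    using assms(2) unfolding cis_partition_def lessThan_Suc by auto
  ultimately show ?thesis
    unfolding cis_partition_def by (auto simp: ivl_disj_un_one(2))
qed

lemma is_CIS_hconcat:
  assumes "t \<ge> 2" "rows_indep k ((t - 1) * k) G" "is_CIS (t - 1) k (code_of k ((t - 1) * k) G)"
    "in_GL k B"
  shows "is_CIS t k (code_of k (t * k) (hconcat ((t - 1) * k) G B))"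
proof -
  let ?H = "hconcat ((t - 1) * k) G B"
  have t: "Suc (t - 1) = t" "(t - 1) * k + k = t * k"
    using assms(1) by (auto simp: mult_eq_if)
  obtain I where "cis_partition (t - 1) k ((t - 1) * k) (code_of k ((t - 1) * k) G) I"
    using assms(3) unfolding is_CIS_iff_cis_partition by blast
  from cis_partition_hconcat[OF assms(2) this assms(4)]
  have "cis_partition t k (t * k) (code_of k (t * k) ?H) (I(t - 1 := {(t - 1) * k..<t * k}))"
    unfolding t .
  moreover have "is_code (t * k) k (code_of k (t * k) ?H)"
    using rows_indep_hconcat[OF assms(2), of "t * k"] t(2) unfolding is_code_def gen_matrix_def by auto
  ultimately show ?thesis
    unfolding is_CIS_iff_cis_partition by blast
qed

lemma cis_partition_permute:
  assumes "\<sigma> permutes {..<n}" "cis_partition t k n C I"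
  shows "cis_partition t k n ((\<lambda>w. w \<circ> \<sigma>) ` C) (\<lambda>s. inv \<sigma> ` I s)"
proof -
  have inj: "inj (inv \<sigma>)" and onto: "inv \<sigma> ` {..<n} = {..<n}"
    using permutes_inv[OF assms(1)] by (auto simp: permutes_inj permutes_image)
  have "info_set n k ((\<lambda>w. w \<circ> \<sigma>) ` C) (inv \<sigma> ` I s)" if "s < t" for s
    using info_set_permute[OF assms(1)] assms(2) that unfolding cis_partition_def by blast
  moreover have "inv \<sigma> ` I s \<inter> inv \<sigma> ` I s' = {}" if "s < t" "s' < t" "s \<noteq> s'" for s s'
    using assms(2) that unfolding cis_partition_def image_Int[OF inj, symmetric] by simp
  moreover have "(\<Union>s<t. inv \<sigma> ` I s) = {..<n}"
    using assms(2) onto unfolding cis_partition_def image_UN[symmetric] by simp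
  ultimately show ?thesis
    unfolding cis_partition_def by blast
qed

lemma exists_permute_last_block:
  assumes "cis_partition (Suc t) k (m + k) C I"
  shows "\<exists>\<sigma> J. \<sigma> permutes {..<m + k} \<and> cis_partition (Suc t) k (m + k) ((\<lambda>w. w \<circ> \<sigma>) ` C) J \<and>
           J t = {m..<m + k}"
proof -
  have "I t \<subseteq> {..<m + k}" "card (I t) = k"
    using assms unfolding cis_partition_def info_set_def by auto
  moreover have "{m..<m + k} \<subseteq> {..<m + k}" "card {m..<m + k} = k"
    by auto
  ultimately obtain \<sigma> where \<sigma>: "\<sigma> permutes {..<m + k}" "\<sigma> ` {m..<m + k} = I t"
    using exists_permutes_image_eq[of "{..<m + k}" "{m..<m + k}" "I t"] by auto
  then have "inv \<sigma> ` I t = {m..<m + k}"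
    by (metis image_inv_f_f permutes_inj)
  then show ?thesis
    using \<sigma>(1) cis_partition_permute[OF \<sigma>(1) assms] by blast
qed

lemma cis_partition_restrict:
  assumes "gen_matrix (m + k) k C H" "cis_partition (Suc t) k (m + k) C J" "J t = {m..<m + k}"
    "t \<ge> 1"
  shows "rows_indep k m H \<and> cis_partition t k m (code_of k m H) J"
proof -
  have J: "J s \<subseteq> {..<m}" "card (J s) = k" "cols_indep k H (J s)" if "s < t" for s
  proof -
    have "J s \<subseteq> {..<m + k}" "J s \<inter> J t = {}"
      using assms(2) that unfolding cis_partition_def info_set_def by auto
    then show "J s \<subseteq> {..<m}"
      using assms(3) by (auto simp: disjoint_iff)
    show "card (J s) = k" "cols_indep k H (J s)"
      using assms(1,2) that unfolding cis_partition_def by (auto simp: info_set_iff_cols_indep)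
  qed
  have rows: "rows_indep k m H"
    using J[of 0] assms(4) by (intro cols_indep_imp_rows_indep) auto
  then have "info_set m k (code_of k m H) (J s)" if "s < t" for s
    using J[OF that] by (simp add: info_set_iff_cols_indep gen_matrix_def)
  moreover have "(\<Union>s<t. J s) = {..<m}"
  proof -
    have "(\<Union>s<Suc t. J s) = {..<m + k}"
      using assms(2) unfolding cis_partition_def by blast
    then have "(\<Union>s<t. J s) \<union> {m..<m + k} = {..<m} \<union> {m..<m + k}"
      using assms(3) by (auto simp: lessThan_Suc)
    moreover have "(\<Union>s<t. J s) \<subseteq> {..<m}"
      using J by blast
    ultimately show ?thesis
      by auto
  qed
  ultimately show ?thesis
    using rows assms(2) unfolding cis_partition_def by auto
qed

lemma is_CIS_imp_equiv_hconcat: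
  assumes "is_CIS t k C" "t \<ge> 2"
  shows "\<exists>H X. rows_indep k ((t - 1) * k) H \<and> is_CIS (t - 1) k (code_of k ((t - 1) * k) H) \<and>
           in_GL k X \<and> code_equiv (t * k) C (code_of k (t * k) (hconcat ((t - 1) * k) H X))"
proof -
  define m where "m = (t - 1) * k"
  have len: "Suc (t - 1) = t" "t * k = m + k"
    using assms(2) unfolding m_def by (auto simp: mult_eq_if)
  obtain I where "cis_partition t k (t * k) C I"
    using assms(1) unfolding is_CIS_iff_cis_partition by blast
  then have "cis_partition (Suc (t - 1)) k (m + k) C I"
    unfolding len .
  from exists_permute_last_block[OF this] obtain \<sigma> J where \<sigma>: "\<sigma> permutes {..<m + k}"
    and J: "cis_partition (Suc (t - 1)) k (m + k) ((\<lambda>w. w \<circ> \<sigma>) ` C) J" "J (t - 1) = {m..<m + k}"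
    by blast
  then have "info_set (m + k) k ((\<lambda>w. w \<circ> \<sigma>) ` C) (J 0)"
    unfolding cis_partition_def by simp
  then obtain H where H: "gen_matrix (m + k) k ((\<lambda>w. w \<circ> \<sigma>) ` C) H"
    unfolding info_set_def by blast
  have rows: "rows_indep k m H" and part: "cis_partition (t - 1) k m (code_of k m H) J"
    using cis_partition_restrict[OF H J] assms(2) by auto
  have "hconcat m H (\<lambda>i j. H i (m + j)) = H"
    by (simp add: fun_eq_iff hconcat_def)
  then have C: "(\<lambda>w. w \<circ> \<sigma>) ` C = code_of k (m + k) (hconcat m H (\<lambda>i j. H i (m + j)))"
    using H unfolding gen_matrix_def by simp
  have "is_CIS (t - 1) k (code_of k m H)"
    using rows part unfolding is_CIS_iff_cis_partition is_code_def gen_matrix_def m_def by auto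
  moreover have "info_set (m + k) k ((\<lambda>w. w \<circ> \<sigma>) ` C) (J (t - 1))"
    using J(1) unfolding cis_partition_def by simp
  then have "in_GL k (\<lambda>i j. H i (m + j))"
    using J(2) info_set_last_block_iff_in_GL[OF rows] unfolding C by simp
  moreover have "code_equiv (m + k) C (code_of k (m + k) (hconcat m H (\<lambda>i j. H i (m + j))))"
    using \<sigma> unfolding code_equiv_def C[symmetric] by blast
  ultimately show ?thesis
    using rows unfolding len(2) m_def[symmetric] by blast
qed

lemma code_equiv_hconcat_change_left:
  assumes "rows_indep k m H" "rows_indep k m G" "code_equiv m (code_of k m H) (code_of k m G)"
    "in_GL k X"
  shows "\<exists>Y. in_GL k Y \<and>
           code_equiv (m + k) (code_of k (m + k) (hconcat m H X)) (code_of k (m + k) (hconcat m G Y))"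
proof -
  obtain \<tau> where \<tau>: "\<tau> permutes {..<m}" "code_of k m G = (\<lambda>w. w \<circ> \<tau>) ` code_of k m H"
    using assms(3) unfolding code_equiv_def by blast
  let ?H\<tau> = "\<lambda>i j. H i (\<tau> j)"
  have rows: "rows_indep k m ?H\<tau>"
    using rows_indep_permute_cols[OF \<tau>(1) assms(1)] .
  have same_code: "code_of k m G = code_of k m ?H\<tau>"
    using \<tau> code_of_permute_cols by metis
  obtain Y where Y: "code_of k (m + k) (hconcat m ?H\<tau> X) = code_of k (m + k) (hconcat m G Y)"
    using code_of_hconcat_change_left[OF assms(2) rows same_code, of "m + k" X] by auto
  have "info_set (m + k) k (code_of k (m + k) (hconcat m ?H\<tau> X)) {m..<m + k}"
    using info_set_last_block_iff_in_GL[OF rows] assms(4) by blast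
  then have "in_GL k Y"
    using info_set_last_block_iff_in_GL[OF assms(2)] unfolding Y by blast
  moreover have "\<tau> permutes {..<m + k}"
    using permutes_subset[OF \<tau>(1)] by auto
  then have "code_equiv (m + k) (code_of k (m + k) (hconcat m H X)) (code_of k (m + k) (hconcat m G Y))"
    using code_of_hconcat_permute_left[OF \<tau>(1), of "m + k"] unfolding code_equiv_def Y[symmetric] by auto
  ultimately show ?thesis
    by blast
qed

lemma is_CIS_imp_equiv_hconcat_representative:
  assumes "is_CIS t k C" "t \<ge> 2"
    and S_gen: "\<forall>G\<in>S. rows_indep k ((t - 1) * k) G"
    and S_all: "\<forall>C. is_CIS (t - 1) k C \<longrightarrow> (\<exists>G\<in>S. code_equiv ((t - 1) * k) C (code_of k ((t - 1) * k) G))"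
    and R_all: "\<forall>A. in_GL k A \<longrightarrow> (\<exists>B\<in>R. sim1 k A B)"
  shows "\<exists>G\<in>S. \<exists>B\<in>R. code_equiv (t * k) C (code_of k (t * k) (hconcat ((t - 1) * k) G B))"
proof -
  define m where "m = (t - 1) * k"
  have n: "t * k = m + k"
    using assms(2) unfolding m_def by (auto simp: mult_eq_if)
  obtain H X where H: "rows_indep k m H" "is_CIS (t - 1) k (code_of k m H)" "in_GL k X"
    and CH: "code_equiv (m + k) C (code_of k (m + k) (hconcat m H X))"
    using is_CIS_imp_equiv_hconcat[OF assms(1,2)] unfolding n m_def[symmetric] by blast
  obtain G where G: "G \<in> S" "code_equiv m (code_of k m H) (code_of k m G)"
    using S_all H(2) unfolding m_def by blast
  obtain Y where Y: "in_GL k Y" "code_equiv (m + k) (code_of k (m + k) (hconcat m H X)) (code_of k (m + k) (hconcat m G Y))"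
    using code_equiv_hconcat_change_left[OF H(1) _ G(2) H(3)] S_gen G(1) unfolding m_def by blast
  obtain B where B: "B \<in> R" "sim1 k Y B"
    using R_all Y(1) by blast
  have "code_equiv (m + k) C (code_of k (m + k) (hconcat m G Y))"
    using CH Y(2) by (rule code_equiv_trans)
  moreover have "code_equiv (m + k) (code_of k (m + k) (hconcat m G Y)) (code_of k (m + k) (hconcat m G B))"
    using code_equiv_hconcat_sim1[OF B(2)] by (rule code_equiv_sym)
  ultimately have "code_equiv (m + k) C (code_of k (m + k) (hconcat m G B))"
    by (rule code_equiv_trans)
  then show ?thesis
    unfolding n m_def[symmetric] using G(1) B(1) by blast
qed

lemma exists_system_of_representatives:
  assumes "equivp R"
  shows "\<exists>Y\<subseteq>X. \<forall>x. (\<exists>y\<in>X. R x y) \<longrightarrow> (\<exists>!y. y \<in> Y \<and> R x y)"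
proof -
  have R_iff: "R x y \<longleftrightarrow> R x = R y" for x y
    using assms unfolding equivp_def by blast
  define rep where "rep x = (SOME y. y \<in> X \<and> R x y)" for x
  have rep: "rep x \<in> X \<and> R x (rep x)" if "\<exists>y\<in>X. R x y" for x
    using someI_ex[OF that[unfolded Bex_def]] unfolding rep_def .
  have rep_cong: "rep x = rep x'" if "R x = R x'" for x x'
    unfolding rep_def that ..
  have rep_X: "rep z \<in> X \<and> R z = R (rep z)" if "z \<in> X" for z
    using rep[of z] that R_iff by blast
  have "\<exists>!y. y \<in> rep ` X \<and> R x y" if x: "\<exists>y\<in>X. R x y" for x
  proof (rule ex1I[of _ "rep x"])
    have "R x = R (rep x)"
      using rep[OF x] R_iff by blast
    then show "rep x \<in> rep ` X \<and> R x (rep x)"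
      using rep[OF x] rep_cong[of x "rep x"] by (metis image_eqI)
  next
    fix y assume "y \<in> rep ` X \<and> R x y"
    then obtain z where "z \<in> X" "y = rep z" "R x = R (rep z)"
      using R_iff by blast
    then show "y = rep x"
      using rep_X rep_cong by metis
  qed
  moreover have "rep ` X \<subseteq> X"
    using rep_X by blast
  ultimately show ?thesis
    by blast
qed

theorem proposition8:
  fixes k t :: nat and S R :: "bmat set"
  assumes "k \<ge> 1" and "t \<ge> 3"
    and S_gen: "\<forall>G\<in>S. rows_indep k ((t - 1) * k) G \<and>
                      is_CIS (t - 1) k (code_of k ((t - 1) * k) G)"
    and S_all: "\<forall>C. is_CIS (t - 1) k C \<longrightarrow>
                   (\<exists>G\<in>S. code_equiv ((t - 1) * k) C (code_of k ((t - 1) * k) G))"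
    and S_rep: "\<forall>G\<in>S. \<forall>G'\<in>S.
                   code_equiv ((t - 1) * k) (code_of k ((t - 1) * k) G) (code_of k ((t - 1) * k) G')
                   \<longrightarrow> G = G'"
    and R_GL: "\<forall>B\<in>R. in_GL k B"
    and R_all: "\<forall>A. in_GL k A \<longrightarrow> (\<exists>B\<in>R. sim1 k A B)"
    and R_rep: "\<forall>B\<in>R. \<forall>B'\<in>R. sim1 k B B' \<longrightarrow> B = B'"
  shows "let Sbar = {code_of k (t * k) (hconcat ((t - 1) * k) G B) | G B. G \<in> S \<and> B \<in> R} in
           (\<forall>C\<in>Sbar. is_CIS t k C) \<and>
           (\<forall>C. is_CIS t k C \<longrightarrow> (\<exists>D\<in>Sbar. code_equiv (t * k) C D)) \<and>
           (\<exists>St \<subseteq> Sbar. \<forall>C. is_CIS t k C \<longrightarrow> (\<exists>!D. D \<in> St \<and> code_equiv (t * k) C D))"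
proof -
  define Sbar where "Sbar = {code_of k (t * k) (hconcat ((t - 1) * k) G B) | G B. G \<in> S \<and> B \<in> R}"
  have t: "t \<ge> 2"
    using assms(2) by simp
  have sound: "is_CIS t k C" if C: "C \<in> Sbar" for C
  proof -
    obtain G B where "C = code_of k (t * k) (hconcat ((t - 1) * k) G B)" "G \<in> S" "B \<in> R"
      using C unfolding Sbar_def by blast
    then show ?thesis
      using is_CIS_hconcat[OF t] S_gen R_GL by simp
  qed
  have complete: "\<exists>D\<in>Sbar. code_equiv (t * k) C D" if C: "is_CIS t k C" for C
  proof -
    obtain G B where "G \<in> S" "B \<in> R"
      and "code_equiv (t * k) C (code_of k (t * k) (hconcat ((t - 1) * k) G B))"
      using is_CIS_imp_equiv_hconcat_representative[OF C t _ S_all R_all] S_gen by blast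
    moreover have "code_of k (t * k) (hconcat ((t - 1) * k) G B) \<in> Sbar"
      unfolding Sbar_def using \<open>G \<in> S\<close> \<open>B \<in> R\<close> by auto
    ultimately show ?thesis
      by blast
  qed
  obtain St where St: "St \<subseteq> Sbar"
    and unique: "\<forall>C. (\<exists>D\<in>Sbar. code_equiv (t * k) C D) \<longrightarrow> (\<exists>!D. D \<in> St \<and> code_equiv (t * k) C D)"
    using exists_system_of_representatives[OF equivp_code_equiv[of "t * k"], of Sbar] by blast
  show ?thesis
    unfolding Let_def Sbar_def[symmetric]
  proof (intro conjI)
    show "\<forall>C\<in>Sbar. is_CIS t k C"
      using sound by blast
    show "\<forall>C. is_CIS t k C \<longrightarrow> (\<exists>D\<in>Sbar. code_equiv (t * k) C D)"
      using complete by blast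
    have "\<forall>C. is_CIS t k C \<longrightarrow> (\<exists>!D. D \<in> St \<and> code_equiv (t * k) C D)"
      using unique complete by simp
    then show "\<exists>St\<subseteq>Sbar. \<forall>C. is_CIS t k C \<longrightarrow> (\<exists>!D. D \<in> St \<and> code_equiv (t * k) C D)"
      using St by blast
  qed
qed

end
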